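(* Let $X$ be a fixed finite set of $m+u$ elements ($m,u\ge 1$), and let $x_1,\dots,x_m$ be random variables obtained by sampling $m$ elements of $X$ uniformly at random without replacement. Let $\phi\colon X^m\to\mathbb{R}$ be a symmetric function such that for all $i\in[1,m]$ and all $x_1,\dots,x_m\in X$, $x'_i\in X$, $$\big|\phi(x_1,\dots,x_m)-\phi(x_1,\dots,x_{i-1},x'_i,x_{i+1},\dots,x_m)\big|\le c .$$ Then for all $\epsilon>0$, $$\Pr\big[\phi-\mathbb{E}[\phi]\ge\epsilon\big]\le\exp\Big[\frac{-2\epsilon^2}{\alpha(m,u)\,c^2}\Big],\qquad \alpha(m,u)=\frac{mu}{m+u-1/2}\cdot\frac{1}{1-1/(2\max\{m,u\})}.$$
   Context: A function $\phi\colon X^m\to\mathbb{R}$ is symmetric if its value does not depend on the order of its arguments: $\phi(x_{\sigma(1)},\dots,x_{\sigma(m)})=\phi(x_1,\dots,x_m)$ for every permutation $\sigma$ of $[1,m]$. *)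

theory Defs
  imports "HOL-Probability.Probability"
begin

text \<open>Sampling m elements of X uniformly at random without replacement:
  the uniform distribution on sequences of m distinct elements of X.\<close>
definition samples_wo_repl :: "'a set \<Rightarrow> nat \<Rightarrow> 'a list set" where
  "samples_wo_repl X m = {xs. set xs \<subseteq> X \<and> length xs = m \<and> distinct xs}"

definition symmetric_on :: "'a set \<Rightarrow> nat \<Rightarrow> ('a list \<Rightarrow> real) \<Rightarrow> bool" where
  "symmetric_on X m \<phi> \<longleftrightarrow>
     (\<forall>xs \<sigma>. set xs \<subseteq> X \<and> length xs = m \<and> \<sigma> permutes {0..<m} \<longrightarrow>
        \<phi> (map (\<lambda>i. xs ! \<sigma> i) [0..<m]) = \<phi> xs)"

definition alpha :: "nat \<Rightarrow> nat \<Rightarrow> real" where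
  "alpha m u = (real m * real u / (real m + real u - 1/2)) *
               (1 / (1 - 1 / (2 * real (max m u))))"

end

theory Submission
  imports Defs "HOL-Combinatorics.Multiset_Permutations"
begin

(* All probabilities are uniform, so we work with plain averages  avg A f  over finite sets.
   Write  S(R,k)  for the k-samples without replacement from R, with |R| = k + u.
   (1) Revealing the first element x of a sample splits S(R, Suc k) into the fibres
       x # S(R - {x}, k).  Swapping the roles of two first elements a, b by a transposition
       shows that the conditional means differ by at most  c * u / (k + u).
   (2) Hoeffding's lemma for the conditional means plus induction on k (a martingale
       argument) bound the moment generating function of  f - avg f  by
       exp (l^2 c^2 var_proxy u k / 8),  where  var_proxy u k = sum_{j<k} (u/(u+j))^2.
   (3) Telescoping gives  var_proxy u m <= m u/(m+u-1/2) * 1/(1-1/(2u)); to obtain the factor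
       with  max m u  we pass, if m > u, to the complementary sample of size u, which is
       legitimate because a symmetric  phi  only depends on the set of sampled elements.
   (4) A Chernoff bound with the optimal  l  turns the mgf bound into the tail bound. *)

definition avg :: "'b set \<Rightarrow> ('b \<Rightarrow> real) \<Rightarrow> real" where
  "avg A f = (\<Sum>x\<in>A. f x) / card A"

lemma avg_reindex:
  assumes "bij_betw g A B"
  shows "avg B f = avg A (\<lambda>x. f (g x))"
  using sum.reindex_bij_betw[OF assms, of f] bij_betw_same_card[OF assms]
  unfolding avg_def by simp

lemma avg_mono: "(\<And>x. x \<in> A \<Longrightarrow> f x \<le> g x) \<Longrightarrow> avg A f \<le> avg A g"
  unfolding avg_def by (intro divide_right_mono sum_mono) auto

lemma avg_nonneg: "(\<And>x. x \<in> A \<Longrightarrow> 0 \<le> f x) \<Longrightarrow> 0 \<le> avg A f"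
  unfolding avg_def by (intro divide_nonneg_nonneg sum_nonneg) auto

lemma avg_cmult: "avg A (\<lambda>x. a * f x) = a * avg A f"
  unfolding avg_def by (simp add: sum_distrib_left)

lemma avg_diff: "avg A (\<lambda>x. f x - g x) = avg A f - avg A g"
  unfolding avg_def by (simp add: sum_subtractf diff_divide_distrib)

lemma avg_Sigma:
  assumes "finite R" and "\<And>x. x \<in> R \<Longrightarrow> finite (B x)" and "\<And>x. x \<in> R \<Longrightarrow> card (B x) = N"
  shows "avg (Sigma R B) f = avg R (\<lambda>x. avg (B x) (\<lambda>y. f (x, y)))"
proof -
  have "card (Sigma R B) = card R * N"
    using assms by simp
  moreover have "sum f (Sigma R B) = (\<Sum>x\<in>R. \<Sum>y\<in>B x. f (x, y))"
    using assms by (simp add: sum.Sigma)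
  ultimately show ?thesis
    using assms(3) unfolding avg_def by (simp add: sum_divide_distrib mult.commute)
qed

lemma hoeffding_avg:
  fixes g :: "'a \<Rightarrow> real"
  assumes "finite A" "A \<noteq> {}" and spread: "\<And>x y. x \<in> A \<Longrightarrow> y \<in> A \<Longrightarrow> g x - g y \<le> d"
    and "l > 0"
  shows "avg A (\<lambda>x. exp (l * (g x - avg A g))) \<le> exp (l\<^sup>2 * d\<^sup>2 / 8)"
proof -
  define M where "M = measure_pmf (pmf_of_set A)"
  define a where "a = Min (g ` A)"
  define b where "b = Max (g ` A)"
  have fin: "finite (g ` A)" "g ` A \<noteq> {}"
    using assms by auto
  obtain x1 where x1: "x1 \<in> A" "b = g x1"
    using Max_in[OF fin] unfolding b_def by auto
  obtain x2 where x2: "x2 \<in> A" "a = g x2"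
    using Min_in[OF fin] unfolding a_def by auto
  have ab: "0 \<le> b - a" "b - a \<le> d"
    using spread[OF x1(1) x2(1)] x1 x2 Min_le[OF fin(1)] unfolding a_def by auto
  have "AE x in M. g x \<in> {a..b}"
    unfolding M_def using assms(1,2) fin(1) by (intro AE_pmfI) (auto simp: a_def b_def)
  then interpret interval_bounded_random_variable M g a b
    unfolding M_def
    by (intro interval_bounded_random_variable.intro interval_bounded_random_variable_axioms.intro
          prob_space_measure_pmf) simp_all
  have int_eq: "expectation h = avg A h" for h
    unfolding M_def avg_def using assms(1,2) by (simp add: integral_pmf_of_set)
  have "nn_integral M (\<lambda>x. exp (l * (g x - expectation g))) \<le> ennreal (exp (l\<^sup>2 * (b - a)\<^sup>2 / 8))"
    by (rule Hoeffdings_lemma_nn_integral[OF assms(4)])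
  moreover have "nn_integral M (\<lambda>x. exp (l * (g x - expectation g)))
      = ennreal (expectation (\<lambda>x. exp (l * (g x - expectation g))))"
    unfolding M_def using assms(1,2)
    by (intro nn_integral_eq_integral integrable_measure_pmf_finite) auto
  ultimately have "avg A (\<lambda>x. exp (l * (g x - avg A g))) \<le> exp (l\<^sup>2 * (b - a)\<^sup>2 / 8)"
    by (simp add: int_eq ennreal_le_iff2)
  also have "\<dots> \<le> exp (l\<^sup>2 * d\<^sup>2 / 8)"
    using ab by (intro exp_mono divide_right_mono mult_left_mono power_mono) auto
  finally show ?thesis .
qed

lemma mgf_avg_Sigma:
  assumes fin: "finite R" "R \<noteq> {}" "\<And>x. x \<in> R \<Longrightarrow> finite (B x)"
    and card: "\<And>x. x \<in> R \<Longrightarrow> card (B x) = N"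
    and fibre: "\<And>x. x \<in> R \<Longrightarrow>
      avg (B x) (\<lambda>y. exp (l * (h (x, y) - avg (B x) (\<lambda>y. h (x, y))))) \<le> E"
    and spread: "\<And>x x'. x \<in> R \<Longrightarrow> x' \<in> R \<Longrightarrow>
      avg (B x) (\<lambda>y. h (x, y)) - avg (B x') (\<lambda>y. h (x', y)) \<le> d"
    and "l > 0"
  shows "avg (Sigma R B) (\<lambda>p. exp (l * (h p - avg (Sigma R B) h))) \<le> E * exp (l\<^sup>2 * d\<^sup>2 / 8)"
proof -
  define g where "g x = avg (B x) (\<lambda>y. h (x, y))" for x
  define \<mu> where "\<mu> = avg R g"
  have mean: "avg (Sigma R B) h = \<mu>"
    unfolding \<mu>_def g_def by (rule avg_Sigma[OF fin(1,3) card])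
  obtain x0 where "x0 \<in> R"
    using fin(2) by auto
  then have E: "0 \<le> E"
    using fibre[of x0] avg_nonneg[of "B x0" "\<lambda>y. exp (l * (h (x0, y) - g x0))"]
    unfolding g_def by fastforce
  have split: "exp (l * (h (x, y) - \<mu>)) = exp (l * (g x - \<mu>)) * exp (l * (h (x, y) - g x))" for x y
    by (simp add: exp_add[symmetric] algebra_simps)
  have "avg (Sigma R B) (\<lambda>p. exp (l * (h p - \<mu>)))
      = avg R (\<lambda>x. exp (l * (g x - \<mu>)) * avg (B x) (\<lambda>y. exp (l * (h (x, y) - g x))))"
    using avg_Sigma[OF fin(1,3) card, where f = "\<lambda>p. exp (l * (h p - \<mu>))"]
    by (simp add: split avg_cmult)
  also have "\<dots> \<le> avg R (\<lambda>x. E * exp (l * (g x - \<mu>)))"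
    using fibre unfolding g_def by (intro avg_mono) (simp add: mult.commute)
  also have "\<dots> = E * avg R (\<lambda>x. exp (l * (g x - avg R g)))"
    unfolding avg_cmult \<mu>_def ..
  also have "\<dots> \<le> E * exp (l\<^sup>2 * d\<^sup>2 / 8)"
    using spread unfolding g_def by (intro mult_left_mono hoeffding_avg fin E \<open>l > 0\<close>) auto
  finally show ?thesis
    unfolding mean .
qed

text \<open>Chernoff bound: an mgf bound exp (l^2 T / 8) for all l > 0 gives the Gaussian tail
  exp (-2 \<epsilon>^2 / T), using the optimal choice l = 4 \<epsilon> / T.\<close>

lemma chernoff_avg:
  assumes "finite A" "A \<noteq> {}" "T > 0" "\<epsilon> > 0"
    and mgf: "\<And>l. l > 0 \<Longrightarrow> avg A (\<lambda>x. exp (l * (f x - avg A f))) \<le> exp (l\<^sup>2 * T / 8)"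
  shows "card {x \<in> A. f x - avg A f \<ge> \<epsilon>} / card A \<le> exp (- 2 * \<epsilon>\<^sup>2 / T)"
proof -
  define l where "l = 4 * \<epsilon> / T"
  have l: "l > 0"
    unfolding l_def using assms(3,4) by simp
  have indicator: "(if f x - avg A f \<ge> \<epsilon> then 1 else 0) \<le> exp (- l * \<epsilon>) * exp (l * (f x - avg A f))"
    for x
  proof -
    have "f x - avg A f \<ge> \<epsilon> \<Longrightarrow> 0 \<le> l * (f x - avg A f) + - l * \<epsilon>"
      using l mult_left_mono[of \<epsilon> "f x - avg A f" l] by (simp add: algebra_simps)
    then show ?thesis
      by (simp add: exp_add[symmetric])
  qed
  have "card {x \<in> A. f x - avg A f \<ge> \<epsilon>} / card A = avg A (\<lambda>x. if f x - avg A f \<ge> \<epsilon> then 1 else 0)"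
    unfolding avg_def using assms(1) by (simp add: sum.If_cases Int_def conj_commute)
  also have "\<dots> \<le> exp (- l * \<epsilon>) * avg A (\<lambda>x. exp (l * (f x - avg A f)))"
    unfolding avg_cmult[symmetric] by (rule avg_mono[OF indicator])
  also have "\<dots> \<le> exp (- l * \<epsilon>) * exp (l\<^sup>2 * T / 8)"
    by (intro mult_left_mono mgf l) simp
  also have "\<dots> = exp (- 2 * \<epsilon>\<^sup>2 / T)"
    unfolding l_def using assms(3) by (simp add: exp_add[symmetric] power2_eq_square field_simps)
  finally show ?thesis .
qed

lemma finite_samples: "finite A \<Longrightarrow> finite (samples_wo_repl A k)"
  unfolding samples_wo_repl_def
  by (rule finite_subset[OF _ finite_lists_length_eq[of A k]]) auto

lemma card_samples:
  assumes "finite A" "k \<le> card A"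
  shows "card (samples_wo_repl A k) = \<Prod>{card A - k + 1 .. card A}"
proof -
  have "samples_wo_repl A k = {xs. length xs = k \<and> distinct xs \<and> set xs \<subseteq> A}"
    unfolding samples_wo_repl_def by auto
  then show ?thesis
    using card_lists_distinct_length_eq[OF assms] by simp
qed

lemma card_samples_fact:
  assumes "finite A" "k \<le> card A"
  shows "real (card (samples_wo_repl A k)) = fact (card A) / fact (card A - k)"
proof -
  have "(fact (card A) :: nat) = fact (card A - k) * \<Prod>{Suc (card A - k)..card A}"
    by (rule fact_eq_fact_times) simp
  then have "real (card (samples_wo_repl A k)) * fact (card A - k) = fact (card A)"
    unfolding card_samples[OF assms] by (metis Suc_eq_plus1 mult.commute of_nat_fact of_nat_mult)
  then show ?thesis
    by (simp add: field_simps)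
qed

lemma card_samples_avoiding_ratio:
  assumes "finite A" "card A = k + u" "u \<ge> 1" "b \<in> A"
  shows "real (card (samples_wo_repl (A - {b}) k)) / real (card (samples_wo_repl A k))
       = real u / (real k + real u)"
proof -
  obtain v where v: "u = Suc v"
    using assms(3) by (cases u) auto
  define C where "C = real (card (samples_wo_repl (A - {b}) k))"
  have "card (A - {b}) = k + v"
    using assms v by simp
  then have C: "C = fact (k + v) / fact v"
    using card_samples_fact[of "A - {b}" k] assms(1) unfolding C_def by simp
  then have "C > 0"
    by simp
  have "real (card (samples_wo_repl A k)) = fact (k + u) / fact u"
    using card_samples_fact[OF assms(1)] assms(2) by simp
  also have "\<dots> = (real k + real u) / real u * C"
    unfolding C v by simp
  finally have card_A: "real (card (samples_wo_repl A k)) = (real k + real u) / real u * C" .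
  show ?thesis
    using \<open>C > 0\<close> assms(3) unfolding card_A C_def[symmetric] by simp
qed

lemma bij_betw_samples_Suc:
  "bij_betw (\<lambda>(x, ys). x # ys) (SIGMA x:R. samples_wo_repl (R - {x}) k) (samples_wo_repl R (Suc k))"
proof (rule bij_betw_imageI)
  show "inj_on (\<lambda>(x, ys). x # ys) (SIGMA x:R. samples_wo_repl (R - {x}) k)"
    by (auto simp: inj_on_def)
  have "samples_wo_repl R (Suc k) = (\<lambda>(x, ys). x # ys) ` (SIGMA x:R. samples_wo_repl (R - {x}) k)"
    unfolding samples_wo_repl_def by (auto simp: length_Suc_conv image_iff)
  then show "(\<lambda>(x, ys). x # ys) ` (SIGMA x:R. samples_wo_repl (R - {x}) k)
      = samples_wo_repl R (Suc k)"
    by simp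
qed

definition set_symmetric :: "'a set \<Rightarrow> nat \<Rightarrow> ('a list \<Rightarrow> real) \<Rightarrow> bool" where
  "set_symmetric R k f \<longleftrightarrow>
     (\<forall>xs\<in>samples_wo_repl R k. \<forall>ys\<in>samples_wo_repl R k. set xs = set ys \<longrightarrow> f xs = f ys)"

definition replace_bounded :: "'a set \<Rightarrow> nat \<Rightarrow> real \<Rightarrow> ('a list \<Rightarrow> real) \<Rightarrow> bool" where
  "replace_bounded R k c f \<longleftrightarrow>
     (\<forall>xs\<in>samples_wo_repl R k. \<forall>i<k. \<forall>x'\<in>R - set xs. \<bar>f xs - f (xs[i := x'])\<bar> \<le> c)"

lemma set_symmetricD:
  "set_symmetric R k f \<Longrightarrow> xs \<in> samples_wo_repl R k \<Longrightarrow> ys \<in> samples_wo_repl R k \<Longrightarrow>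
    set xs = set ys \<Longrightarrow> f xs = f ys"
  unfolding set_symmetric_def by blast

lemma set_symmetric_Cons:
  assumes "set_symmetric R (Suc k) f" "x \<in> R"
  shows "set_symmetric (R - {x}) k (\<lambda>ys. f (x # ys))"
  unfolding set_symmetric_def
proof (intro ballI impI)
  fix xs ys
  assume "xs \<in> samples_wo_repl (R - {x}) k" "ys \<in> samples_wo_repl (R - {x}) k" "set xs = set ys"
  then have "x # xs \<in> samples_wo_repl R (Suc k)" "x # ys \<in> samples_wo_repl R (Suc k)"
    "set (x # xs) = set (x # ys)"
    using assms(2) unfolding samples_wo_repl_def by auto
  then show "f (x # xs) = f (x # ys)"
    by (rule set_symmetricD[OF assms(1)])
qed

lemma replace_bounded_Cons:
  assumes "replace_bounded R (Suc k) c f" "x \<in> R"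
  shows "replace_bounded (R - {x}) k c (\<lambda>ys. f (x # ys))"
  unfolding replace_bounded_def
proof (intro ballI allI impI)
  fix ys i x'
  assume ys: "ys \<in> samples_wo_repl (R - {x}) k" and "i < k" and x': "x' \<in> R - {x} - set ys"
  then have "x # ys \<in> samples_wo_repl R (Suc k)" "Suc i < Suc k" "x' \<in> R - set (x # ys)"
    using assms(2) unfolding samples_wo_repl_def by auto
  then have "\<bar>f (x # ys) - f ((x # ys)[Suc i := x'])\<bar> \<le> c"
    using assms(1) unfolding replace_bounded_def by blast
  then show "\<bar>f (x # ys) - f (x # ys[i := x'])\<bar> \<le> c"
    by simp
qed

lemma swap_first_bound:
  assumes sym: "set_symmetric R (Suc k) f" and bd: "replace_bounded R (Suc k) c f"
    and ab: "a \<in> R" "b \<in> R" "a \<noteq> b" and ys: "ys \<in> samples_wo_repl (R - {a}) k"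
  shows "f (a # ys) - f (b # map (Transposition.transpose a b) ys) \<le> (if b \<in> set ys then 0 else c)"
proof -
  let ?\<tau> = "Transposition.transpose a b"
  have ys_R: "set ys \<subseteq> R - {a}" "distinct ys" "length ys = k"
    using ys unfolding samples_wo_repl_def by auto
  have a_ys: "a # ys \<in> samples_wo_repl R (Suc k)"
    using ys_R ab unfolding samples_wo_repl_def by auto
  show ?thesis
  proof (cases "b \<in> set ys")
    case True
    have set_eq: "set (map ?\<tau> ys) = insert a (set ys - {b})"
      using True ys_R(1) by (auto simp: Transposition.transpose_def image_iff)
    then have "b # map ?\<tau> ys \<in> samples_wo_repl R (Suc k)"
      using ys_R ab unfolding samples_wo_repl_def by (auto simp: distinct_map)
    moreover have "set (a # ys) = set (b # map ?\<tau> ys)"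
      using True set_eq by auto
    ultimately have "f (a # ys) = f (b # map ?\<tau> ys)"
      by (rule set_symmetricD[OF sym a_ys])
    then show ?thesis
      using True by simp
  next
    case False
    have "map ?\<tau> ys = ys"
      using False ys_R(1) by (intro map_idI transpose_apply_other) auto
    moreover have "b \<in> R - set (a # ys)"
      using False ab by auto
    ultimately have "\<bar>f (a # ys) - f (b # map ?\<tau> ys)\<bar> \<le> c"
      using bd a_ys unfolding replace_bounded_def
      by (metis list_update_code(2) zero_less_Suc)
    then show ?thesis
      using False by simp
  qed
qed

text \<open>Bounded martingale differences: the conditional means given two different first elements
  differ by at most c * u / (k + u), because the swap coupling only costs c on the samples
  that avoid b.\<close>

lemma conditional_means_spread:
  assumes fin: "finite R" and card_R: "card R = Suc k + u" and u: "u \<ge> 1"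
    and sym: "set_symmetric R (Suc k) f" and bd: "replace_bounded R (Suc k) c f" and c: "c \<ge> 0"
    and ab: "a \<in> R" "b \<in> R"
  shows "avg (samples_wo_repl (R - {a}) k) (\<lambda>ys. f (a # ys))
       - avg (samples_wo_repl (R - {b}) k) (\<lambda>ys. f (b # ys)) \<le> c * real u / (real k + real u)"
proof (cases "a = b")
  case True
  then show ?thesis
    using c by simp
next
  case False
  let ?\<tau> = "Transposition.transpose a b"
  define La where "La = samples_wo_repl (R - {a}) k"
  define Lb where "Lb = samples_wo_repl (R - {b}) k"
  have swap: "bij_betw (map ?\<tau>) La Lb"
  proof (rule bij_betw_byWitness[where f' = "map ?\<tau>"])
    have "map ?\<tau> ys \<in> samples_wo_repl (R - {y}) k"
      if "ys \<in> samples_wo_repl (R - {x}) k" "{x, y} = {a, b}" for ys x y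
      using that ab unfolding samples_wo_repl_def
      by (auto simp: distinct_map Transposition.transpose_def split: if_splits)
    then show "map ?\<tau> ` La \<subseteq> Lb" "map ?\<tau> ` Lb \<subseteq> La"
      unfolding La_def Lb_def by auto
  qed (simp_all add: map_idI)
  have avoid: "{ys \<in> La. b \<notin> set ys} = samples_wo_repl (R - {a} - {b}) k"
    unfolding La_def samples_wo_repl_def by auto
  have "avg La (\<lambda>ys. f (a # ys)) - avg Lb (\<lambda>ys. f (b # ys))
      = avg La (\<lambda>ys. f (a # ys) - f (b # map ?\<tau> ys))"
    unfolding avg_reindex[OF swap] avg_diff ..
  also have "\<dots> \<le> avg La (\<lambda>ys. c * (if b \<in> set ys then 0 else 1))"
  proof (rule avg_mono)
    fix ys
    assume "ys \<in> La"
    then show "f (a # ys) - f (b # map ?\<tau> ys) \<le> c * (if b \<in> set ys then 0 else 1)"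
      using swap_first_bound[OF sym bd ab(1,2) False, of ys] unfolding La_def
      by (cases "b \<in> set ys") simp_all
  qed
  also have "\<dots> = c * (card (samples_wo_repl (R - {a} - {b}) k) / card La)"
    unfolding avg_cmult avg_def avoid[symmetric]
    using finite_samples[OF finite_Diff[OF fin]] unfolding La_def
    by (simp add: sum.If_cases Int_def)
  also have "\<dots> = c * real u / (real k + real u)"
    unfolding La_def using fin card_R u ab False
    by (subst card_samples_avoiding_ratio) auto
  finally show ?thesis
    unfolding La_def Lb_def .
qed

text \<open>The variance proxy accumulated by the martingale argument: the j-th revealed element
  contributes the squared range bound (u / (u + j))^2 (in units of c^2).\<close>

definition var_proxy :: "nat \<Rightarrow> nat \<Rightarrow> real" where
  "var_proxy u k = (\<Sum>j<k. (real u / (real u + real j))\<^sup>2)"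

lemma mgf_samples:
  fixes f :: "'a list \<Rightarrow> real"
  assumes "u \<ge> 1" "l > 0" "c \<ge> 0"
    and "finite R" "card R = k + u" "set_symmetric R k f" "replace_bounded R k c f"
  shows "avg (samples_wo_repl R k) (\<lambda>xs. exp (l * (f xs - avg (samples_wo_repl R k) f)))
      \<le> exp (l\<^sup>2 * c\<^sup>2 * var_proxy u k / 8)"
  using assms(4-7)
proof (induction k arbitrary: R f)
  case 0
  have "samples_wo_repl R 0 = {[]}"
    unfolding samples_wo_repl_def by auto
  then show ?case
    by (simp add: avg_def var_proxy_def)
next
  case (Suc k)
  define B where "B x = samples_wo_repl (R - {x}) k" for x
  define h where "h p = f (fst p # snd p)" for p
  have fin_B: "finite (B x)" for x
    unfolding B_def using Suc.prems(1) by (simp add: finite_samples)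
  have card_R_x: "card (R - {x}) = k + u" if "x \<in> R" for x
    using that Suc.prems(1,2) by simp
  have card_B: "card (B x) = \<Prod>{u + 1 .. k + u}" if "x \<in> R" for x
    unfolding B_def using card_samples[of "R - {x}" k] Suc.prems(1) card_R_x[OF that] by simp
  have R_ne: "R \<noteq> {}"
    using Suc.prems(2) by auto
  have reveal: "avg (samples_wo_repl R (Suc k)) F
      = avg (Sigma R B) (\<lambda>p. F (case p of (x, ys) \<Rightarrow> x # ys))" for F
    unfolding B_def by (rule avg_reindex[OF bij_betw_samples_Suc])
  have fibre: "avg (B x) (\<lambda>ys. exp (l * (h (x, ys) - avg (B x) (\<lambda>ys. h (x, ys)))))
      \<le> exp (l\<^sup>2 * c\<^sup>2 * var_proxy u k / 8)" if "x \<in> R" for x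
    unfolding B_def h_def
    using Suc.IH[OF _ card_R_x[OF that] set_symmetric_Cons[OF Suc.prems(3) that]
        replace_bounded_Cons[OF Suc.prems(4) that]] Suc.prems(1) by simp
  have spread: "avg (B x) (\<lambda>ys. h (x, ys)) - avg (B x') (\<lambda>ys. h (x', ys))
      \<le> c * real u / (real k + real u)" if "x \<in> R" "x' \<in> R" for x x'
    using conditional_means_spread[OF Suc.prems(1) _ assms(1) Suc.prems(3,4) assms(3) that]
      Suc.prems(2) unfolding B_def h_def by simp
  have "avg (samples_wo_repl R (Suc k)) (\<lambda>xs. exp (l * (f xs - avg (samples_wo_repl R (Suc k)) f)))
      = avg (Sigma R B) (\<lambda>p. exp (l * (h p - avg (Sigma R B) h)))"
    unfolding reveal h_def by (simp add: case_prod_beta)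
  also have "\<dots> \<le> exp (l\<^sup>2 * c\<^sup>2 * var_proxy u k / 8)
      * exp (l\<^sup>2 * (c * real u / (real k + real u))\<^sup>2 / 8)"
    by (rule mgf_avg_Sigma[OF Suc.prems(1) R_ne fin_B card_B fibre spread assms(2)])
  also have "\<dots> = exp (l\<^sup>2 * c\<^sup>2 * var_proxy u (Suc k) / 8)"
    unfolding var_proxy_def
    by (simp add: exp_add[symmetric] power_divide power_mult_distrib field_simps)
  finally show ?case .
qed

text \<open>Telescoping: 1/x^2 \<le> 1/(x - 1/2) - 1/(x + 1/2), summed over x = u, ..., u + k - 1.\<close>

lemma inverse_squares_telescope:
  assumes "u \<ge> 1"
  shows "(\<Sum>j<k. 1 / (real u + real j)\<^sup>2) \<le> 1 / (real u - 1/2) - 1 / (real u + real k - 1/2)"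
proof (induction k)
  case 0
  then show ?case by simp
next
  case (Suc k)
  define x where "x = real u + real k"
  have x: "x \<ge> 1"
    using assms unfolding x_def by simp
  have "1 / x\<^sup>2 \<le> 1 / (x\<^sup>2 - 1/4)"
    using x mult_mono[of 1 x 1 x] by (intro divide_left_mono) (auto simp: power2_eq_square)
  also have "\<dots> = 1 / (x - 1/2) - 1 / (x + 1/2)"
    using x by (simp add: field_simps power2_eq_square)
  finally show ?case
    using Suc unfolding x_def by (simp add: algebra_simps)
qed

lemma var_proxy_le:
  assumes "u \<ge> 1" "k \<ge> 1"
  shows "var_proxy u k \<le> real k * real u / (real k + real u - 1/2) * (1 / (1 - 1 / (2 * real u)))"
proof -
  have "var_proxy u k = (real u)\<^sup>2 * (\<Sum>j<k. 1 / (real u + real j)\<^sup>2)"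
    unfolding var_proxy_def by (simp add: sum_distrib_left power_divide)
  also have "\<dots> \<le> (real u)\<^sup>2 * (1 / (real u - 1/2) - 1 / (real u + real k - 1/2))"
    by (intro mult_left_mono inverse_squares_telescope assms) auto
  also have "\<dots> = real k * real u / (real k + real u - 1/2) * (1 / (1 - 1 / (2 * real u)))"
    using assms by (simp add: field_simps power2_eq_square)
  finally show ?thesis .
qed

lemma var_proxy_pos:
  assumes "u \<ge> 1" "k \<ge> 1"
  shows "var_proxy u k > 0"
proof -
  have "(real u / (real u + real 0))\<^sup>2 \<le> var_proxy u k"
    unfolding var_proxy_def using assms by (intro member_le_sum) auto
  then show ?thesis
    using assms by simp
qed

text \<open>Revealing the larger of the sample and its complement last gives exactly alpha.\<close>

lemma var_proxy_max_min_le_alpha: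
  assumes "m \<ge> 1" "u \<ge> 1"
  shows "var_proxy (max m u) (min m u) \<le> alpha m u"
proof (cases "m \<le> u")
  case True
  then show ?thesis
    using var_proxy_le[OF assms(2,1)] unfolding alpha_def by (simp add: max_def min_def)
next
  case False
  then show ?thesis
    using var_proxy_le[OF assms] unfolding alpha_def by (simp add: max_def min_def ac_simps)
qed

text \<open>A set-symmetric function of an m-sample from a set
  of size m + u is a function of the unsampled u elements; to evaluate it we need some fixed
  enumeration of a finite set.\<close>

definition listing :: "'a set \<Rightarrow> 'a list" where
  "listing S = (SOME xs. set xs = S \<and> distinct xs)"

lemma listing: "finite S \<Longrightarrow> set (listing S) = S \<and> distinct (listing S)"
  unfolding listing_def by (rule someI_ex) (rule finite_distinct_list)

lemma listing_in_samples: "finite X \<Longrightarrow> S \<subseteq> X \<Longrightarrow> card S = m \<Longrightarrow> listing S \<in> samples_wo_repl X m"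
  using listing[of S] finite_subset[of S X] distinct_card[of "listing S"]
  unfolding samples_wo_repl_def by auto

definition k_subsets :: "'a set \<Rightarrow> nat \<Rightarrow> 'a set set" where
  "k_subsets R k = {S. S \<subseteq> R \<and> card S = k}"

text \<open>Every k-subset is the set of exactly k! samples, so averaging a function of the sampled
  set over samples is averaging over k-subsets.\<close>

lemma sum_samples_set:
  assumes "finite R"
  shows "(\<Sum>xs\<in>samples_wo_repl R k. h (set xs)) = fact k * (\<Sum>S\<in>k_subsets R k. h S)"
proof -
  have fin_subsets: "finite (k_subsets R k)"
    unfolding k_subsets_def by (rule finite_subset[of _ "Pow R"]) (use assms in auto)
  have "set ` samples_wo_repl R k \<subseteq> k_subsets R k"
    unfolding k_subsets_def samples_wo_repl_def by (auto simp: distinct_card)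
  then have "(\<Sum>xs\<in>samples_wo_repl R k. h (set xs))
      = (\<Sum>S\<in>k_subsets R k. \<Sum>xs\<in>{xs \<in> samples_wo_repl R k. set xs = S}. h (set xs))"
    by (rule sum.group[symmetric, OF finite_samples[OF assms] fin_subsets])
  also have "\<dots> = (\<Sum>S\<in>k_subsets R k. fact k * h S)"
  proof (rule sum.cong[OF refl])
    fix S
    assume S: "S \<in> k_subsets R k"
    then have "{xs \<in> samples_wo_repl R k. set xs = S} = permutations_of_set S"
      unfolding k_subsets_def samples_wo_repl_def permutations_of_set_def
      by (auto simp: distinct_card)
    moreover have "(\<Sum>xs\<in>permutations_of_set S. h (set xs)) = (\<Sum>xs\<in>permutations_of_set S. h S)"
      by (rule sum.cong) (auto dest: permutations_of_setD)
    moreover have "finite S" "card S = k"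
      using S assms unfolding k_subsets_def by (auto intro: finite_subset)
    ultimately show "(\<Sum>xs\<in>{xs \<in> samples_wo_repl R k. set xs = S}. h (set xs)) = fact k * h S"
      by (simp add: card_permutations_of_set)
  qed
  finally show ?thesis
    by (simp add: sum_distrib_left)
qed

lemma avg_samples_set:
  assumes "finite R"
  shows "avg (samples_wo_repl R k) (\<lambda>xs. h (set xs)) = avg (k_subsets R k) h"
proof -
  have "real (card (samples_wo_repl R k)) = fact k * card (k_subsets R k)"
    using sum_samples_set[OF assms, of "\<lambda>_. 1 :: real"] by simp
  then show ?thesis
    unfolding avg_def sum_samples_set[OF assms] by simp
qed

lemma bij_betw_complement_subsets:
  assumes "finite X" "card X = m + u"
  shows "bij_betw (\<lambda>T. X - T) (k_subsets X u) (k_subsets X m)"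
  by (rule bij_betw_byWitness[where f' = "\<lambda>T. X - T"])
    (use assms in \<open>auto simp: k_subsets_def card_Diff_subset finite_subset\<close>)

lemma avg_complement_samples:
  assumes fin: "finite X" and card_X: "card X = m + u" and sym: "set_symmetric X m \<phi>"
  shows "avg (samples_wo_repl X m) (\<lambda>xs. F (\<phi> xs))
       = avg (samples_wo_repl X u) (\<lambda>zs. F (\<phi> (listing (X - set zs))))"
proof -
  have "\<phi> xs = \<phi> (listing (set xs))" if xs: "xs \<in> samples_wo_repl X m" for xs
  proof -
    have "listing (set xs) \<in> samples_wo_repl X m"
      using xs fin by (intro listing_in_samples) (auto simp: samples_wo_repl_def distinct_card)
    then show ?thesis
      using set_symmetricD[OF sym xs] listing[of "set xs"] by simp
  qed
  then have "avg (samples_wo_repl X m) (\<lambda>xs. F (\<phi> xs))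
      = avg (samples_wo_repl X m) (\<lambda>xs. F (\<phi> (listing (set xs))))"
    unfolding avg_def by (simp cong: sum.cong)
  also have "\<dots> = avg (k_subsets X m) (\<lambda>S. F (\<phi> (listing S)))"
    by (rule avg_samples_set[OF fin])
  also have "\<dots> = avg (k_subsets X u) (\<lambda>T. F (\<phi> (listing (X - T))))"
    by (rule avg_reindex[OF bij_betw_complement_subsets[OF fin card_X]])
  also have "\<dots> = avg (samples_wo_repl X u) (\<lambda>zs. F (\<phi> (listing (X - set zs))))"
    by (rule avg_samples_set[OF fin, symmetric])
  finally show ?thesis .
qed

text \<open>Replacing one element of the u-sample by an unsampled one replaces one element of the
  complementary m-sample, so bounded replacements transfer to the complement.\<close>

lemma replace_bounded_complement:
  assumes fin: "finite X" and card_X: "card X = m + u"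
    and sym: "set_symmetric X m \<phi>" and bd: "replace_bounded X m c \<phi>"
  shows "replace_bounded X u c (\<lambda>zs. \<phi> (listing (X - set zs)))"
  unfolding replace_bounded_def
proof (intro ballI allI impI)
  fix zs i x'
  assume zs: "zs \<in> samples_wo_repl X u" and i: "i < u" and x': "x' \<in> X - set zs"
  have zs_X: "set zs \<subseteq> X" "distinct zs" "length zs = u"
    using zs unfolding samples_wo_repl_def by auto
  define A where "A = X - set zs"
  define y where "y = zs ! i"
  have y: "y \<in> set zs" "y \<in> X" "y \<notin> A"
    using i zs_X unfolding y_def A_def by auto
  define p where "p = listing A"
  have "card A = m"
    unfolding A_def using zs_X fin card_X by (simp add: card_Diff_subset distinct_card)
  then have p: "p \<in> samples_wo_repl X m" "set p = A" "distinct p" "length p = m"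
    using listing[of A] listing_in_samples[OF fin, of A m] fin distinct_card[of p]
    unfolding p_def A_def samples_wo_repl_def by auto
  obtain j where j: "j < m" "p ! j = x'"
    using x' p(2,4) unfolding A_def by (metis in_set_conv_nth)
  text \<open>The new complement is the old one with x' replaced by y.\<close>
  have set_zs': "set (zs[i := x']) = insert x' (set zs - {y})"
    unfolding y_def by (rule set_update_distinct[OF zs_X(2)]) (use i zs_X(3) in simp)
  have set_p': "set (p[j := y]) = insert y (A - {x'})"
    using set_update_distinct[OF p(3), of j y] j p(2,4) by simp
  have compl': "X - set (zs[i := x']) = set (p[j := y])"
    unfolding set_zs' set_p' A_def using y x' by blast
  have p': "p[j := y] \<in> samples_wo_repl X m"
    using p y(2,3) set_p' unfolding samples_wo_repl_def A_def
    by (auto intro: distinct_list_update)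
  have "listing (X - set (zs[i := x'])) \<in> samples_wo_repl X m"
    unfolding compl' using fin p'
    by (intro listing_in_samples) (auto simp: samples_wo_repl_def distinct_card)
  then have "\<phi> (listing (X - set (zs[i := x']))) = \<phi> (p[j := y])"
    using set_symmetricD[OF sym _ p'] listing[of "X - set (zs[i := x'])"] fin compl' by simp
  moreover have "\<bar>\<phi> p - \<phi> (p[j := y])\<bar> \<le> c"
    using bd p(1) j(1) y(2,3) p(2) unfolding replace_bounded_def by auto
  ultimately show "\<bar>\<phi> (listing (X - set zs)) - \<phi> (listing (X - set (zs[i := x'])))\<bar> \<le> c"
    unfolding p_def A_def by simp
qed

lemma mgf_symmetric_bounded:
  assumes fin: "finite X" and card_X: "card X = m + u" and "m \<ge> 1" "u \<ge> 1"
    and sym: "set_symmetric X m \<phi>" and bd: "replace_bounded X m c \<phi>" and "c \<ge> 0" "l > 0"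
  shows "avg (samples_wo_repl X m) (\<lambda>xs. exp (l * (\<phi> xs - avg (samples_wo_repl X m) \<phi>)))
      \<le> exp (l\<^sup>2 * c\<^sup>2 * var_proxy (max m u) (min m u) / 8)"
proof (cases "m \<le> u")
  case True
  then show ?thesis
    using mgf_samples[OF \<open>u \<ge> 1\<close> \<open>l > 0\<close> \<open>c \<ge> 0\<close> fin card_X sym bd] by (simp add: max_def min_def)
next
  case False
  define \<psi> where "\<psi> zs = \<phi> (listing (X - set zs))" for zs
  have sym': "set_symmetric X u \<psi>"
    unfolding set_symmetric_def \<psi>_def by auto
  have mean: "avg (samples_wo_repl X m) \<phi> = avg (samples_wo_repl X u) \<psi>"
    using avg_complement_samples[OF fin card_X sym, of "\<lambda>v. v"] unfolding \<psi>_def by simp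
  have bd': "replace_bounded X u c \<psi>"
    unfolding \<psi>_def by (rule replace_bounded_complement[OF fin card_X sym bd])
  have "avg (samples_wo_repl X u) (\<lambda>zs. exp (l * (\<psi> zs - avg (samples_wo_repl X u) \<psi>)))
      \<le> exp (l\<^sup>2 * c\<^sup>2 * var_proxy m u / 8)"
    using card_X by (intro mgf_samples[OF \<open>m \<ge> 1\<close> \<open>l > 0\<close> \<open>c \<ge> 0\<close> fin _ sym' bd']) simp
  then show ?thesis
    using avg_complement_samples[OF fin card_X sym, of "\<lambda>v. exp (l * (v - avg (samples_wo_repl X m) \<phi>))"]
      False unfolding mean \<psi>_def by (simp add: max_def min_def)
qed

lemma tail_bound_samples:
  assumes fin: "finite X" and card_X: "card X = m + u" and "m \<ge> 1" "u \<ge> 1"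
    and sym: "set_symmetric X m \<phi>" and bd: "replace_bounded X m c \<phi>" and "c \<ge> 0" "\<epsilon> > 0"
  defines "L \<equiv> samples_wo_repl X m"
  shows "card {xs \<in> L. \<phi> xs - avg L \<phi> \<ge> \<epsilon>} / card L \<le> exp (- 2 * \<epsilon>\<^sup>2 / (alpha m u * c\<^sup>2))"
proof (cases "c = 0")
  case True
  have "finite L"
    unfolding L_def by (rule finite_samples[OF fin])
  with True show ?thesis
    by (auto simp: divide_le_eq_1 card_mono)
next
  case False
  define T where "T = c\<^sup>2 * var_proxy (max m u) (min m u)"
  have "T > 0"
    unfolding T_def using False var_proxy_pos \<open>m \<ge> 1\<close> \<open>u \<ge> 1\<close> by simp
  have "card L = \<Prod>{u + 1 .. m + u}"
    unfolding L_def using card_samples[OF fin] card_X by simp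
  then have "finite L" "L \<noteq> {}"
    by (auto intro: card_ge_0_finite)
  moreover have "avg L (\<lambda>xs. exp (l * (\<phi> xs - avg L \<phi>))) \<le> exp (l\<^sup>2 * T / 8)" if "l > 0" for l
    using mgf_symmetric_bounded[OF fin card_X \<open>m \<ge> 1\<close> \<open>u \<ge> 1\<close> sym bd \<open>c \<ge> 0\<close> that]
    unfolding T_def L_def by (simp add: mult.assoc)
  ultimately have "card {xs \<in> L. \<phi> xs - avg L \<phi> \<ge> \<epsilon>} / card L \<le> exp (- 2 * \<epsilon>\<^sup>2 / T)"
    by (intro chernoff_avg \<open>T > 0\<close> \<open>\<epsilon> > 0\<close>)
  also have "\<dots> \<le> exp (- 2 * \<epsilon>\<^sup>2 / (alpha m u * c\<^sup>2))"
  proof -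
    have "T \<le> alpha m u * c\<^sup>2"
      unfolding T_def using mult_left_mono[OF var_proxy_max_min_le_alpha, of m u "c\<^sup>2"] assms(3,4)
      by (simp add: mult.commute)
    then have "2 * \<epsilon>\<^sup>2 / (alpha m u * c\<^sup>2) \<le> 2 * \<epsilon>\<^sup>2 / T"
      using \<open>T > 0\<close> by (intro frac_le) auto
    then show ?thesis
      by simp
  qed
  finally show ?thesis .
qed

lemma set_symmetric_if_symmetric_on:
  assumes "symmetric_on X m \<phi>"
  shows "set_symmetric X m \<phi>"
  unfolding set_symmetric_def
proof (intro ballI impI)
  fix xs ys
  assume xs: "xs \<in> samples_wo_repl X m" and ys: "ys \<in> samples_wo_repl X m" and "set xs = set ys"
  then have "mset ys = mset xs"
    unfolding samples_wo_repl_def by (simp add: set_eq_iff_mset_eq_distinct)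
  then obtain \<sigma> where \<sigma>: "\<sigma> permutes {..<length xs}" "permute_list \<sigma> xs = ys"
    by (rule mset_eq_permutation)
  have "length xs = m" "set xs \<subseteq> X"
    using xs unfolding samples_wo_repl_def by auto
  then have "\<phi> (map (\<lambda>i. xs ! \<sigma> i) [0..<m]) = \<phi> xs"
    using assms \<sigma>(1) unfolding symmetric_on_def by (simp add: lessThan_atLeast0)
  moreover have "map (\<lambda>i. xs ! \<sigma> i) [0..<m] = ys"
    using \<sigma>(2) \<open>length xs = m\<close> by (simp add: permute_list_def)
  ultimately show "\<phi> xs = \<phi> ys"
    by simp
qed

lemma replace_bounded_if_bounded_differences:
  assumes "\<And>xs i x'. set xs \<subseteq> X \<Longrightarrow> length xs = m \<Longrightarrow> i < m \<Longrightarrow> x' \<in> X \<Longrightarrow>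
             \<bar>\<phi> xs - \<phi> (xs[i := x'])\<bar> \<le> c"
  shows "replace_bounded X m c \<phi>"
  using assms unfolding replace_bounded_def samples_wo_repl_def by auto

text \<open>Bounded differences force c \<ge> 0: replace an entry of a tuple by itself.\<close>

lemma bounded_differences_nonneg:
  fixes \<phi> :: "'a list \<Rightarrow> real"
  assumes "\<And>xs i x'. set xs \<subseteq> X \<Longrightarrow> length xs = m \<Longrightarrow> i < m \<Longrightarrow> x' \<in> X \<Longrightarrow>
             \<bar>\<phi> xs - \<phi> (xs[i := x'])\<bar> \<le> c"
    and "x \<in> X" "m \<ge> 1"
  shows "c \<ge> 0"
proof -
  have "\<bar>\<phi> (replicate m x) - \<phi> ((replicate m x)[0 := replicate m x ! 0])\<bar> \<le> c"
    using assms by (intro assms(1)) auto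
  then show ?thesis
    unfolding list_update_id by simp
qed

theorem theorem5:
  fixes X :: "'a set" and m u :: nat and \<phi> :: "'a list \<Rightarrow> real" and c \<epsilon> :: real
  assumes "finite X" and "card X = m + u" and "m \<ge> 1" and "u \<ge> 1"
    and "symmetric_on X m \<phi>"
    and "\<And>xs i x'. set xs \<subseteq> X \<Longrightarrow> length xs = m \<Longrightarrow> i < m \<Longrightarrow> x' \<in> X \<Longrightarrow>
           \<bar>\<phi> xs - \<phi> (xs[i := x'])\<bar> \<le> c"
    and "\<epsilon> > 0"
  shows "measure_pmf.prob (pmf_of_set (samples_wo_repl X m))
           {xs. \<phi> xs - measure_pmf.expectation (pmf_of_set (samples_wo_repl X m)) \<phi> \<ge> \<epsilon>}
         \<le> exp (- 2 * \<epsilon>^2 / (alpha m u * c^2))"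
proof -
  define L where "L = samples_wo_repl X m"
  have "card L = \<Prod>{u + 1 .. m + u}"
    unfolding L_def using card_samples[OF assms(1)] assms(2) by simp
  then have L: "finite L" "L \<noteq> {}"
    by (auto intro: card_ge_0_finite)
  obtain x where "x \<in> X"
    using assms(2,3) by fastforce
  have "c \<ge> 0"
    by (rule bounded_differences_nonneg[OF assms(6) \<open>x \<in> X\<close> assms(3)])
  have "measure_pmf.prob (pmf_of_set L) {xs. \<phi> xs - measure_pmf.expectation (pmf_of_set L) \<phi> \<ge> \<epsilon>}
      = card {xs \<in> L. \<phi> xs - avg L \<phi> \<ge> \<epsilon>} / card L"
    using L by (simp add: measure_pmf_of_set integral_pmf_of_set avg_def Int_def conj_commute)
  also have "\<dots> \<le> exp (- 2 * \<epsilon>\<^sup>2 / (alpha m u * c\<^sup>2))"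
    unfolding L_def
    by (rule tail_bound_samples[OF assms(1-4) set_symmetric_if_symmetric_on[OF assms(5)]
          replace_bounded_if_bounded_differences[OF assms(6)] \<open>c \<ge> 0\<close> assms(7)])
  finally show ?thesis
    unfolding L_def .
qed

end
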